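(* Let $\beta_{\boldsymbol{i}},\beta_{\boldsymbol{j}}\in\mathcal{B}_{\ell,\ell+1}$ be a problematic pair, and let $\beta_{\boldsymbol{i}}$ be resolved in direction $k\in\{1,2\}$. Then there exists some $\beta_{\boldsymbol{t}}\in S_{\boldsymbol{i},k}$ that is problematic with $\beta_{\boldsymbol{j}}$ and satisfies $|t_k-j_k|<|i_k-j_k|$.
   Context: Fix a hierarchical level $\ell$. In dimension two, for $k=1,2$ let $\Xi_{\ell,k}=(\xi_{1,\ell,k}\le\xi_{2,\ell,k}\le\dots)$ be the level-$\ell$ knot vector with degree $p_{(\ell,k)}$, and $\Xi_{\ell+1,k}=(\xi_{1,\ell+1,k}\le\dots)$ the level-$(\ell+1)$ knot vector with degree $p_{(\ell+1,k)}$. The level-$\ell$ tensor-product B-spline basis is $\mathcal{B}^{\mathbf{0}}_\ell=\{\beta_{\boldsymbol{i}}\}$, $\boldsymbol{i}=(i_1,i_2)\in\mathbb{N}^2$, with $\beta_{\boldsymbol{i}}(x_1,x_2)=\prod_{k}b_{i_k,k}(x_k)$, $b_{i_k,k}$ the univariate B-spline of degree $p_{(\ell,k)}$ on knots $\xi_{i_k,\ell,k},\dots,\xi_{i_k+p_{(\ell,k)}+1,\ell,k}$. $\operatorname{supp}$ denotes the (open) support and $\overline{\operatorname{supp}}$ its closure. Let $\Omega_{\ell+1}$ be a given subdomain and $\mathcal{B}_{\ell,\ell+1}=\{\beta\in\mathcal{B}^{\mathbf{0}}_\ell:\operatorname{supp}(\beta)\subseteq\Omega_{\ell+1}\}$.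 For $\boldsymbol{v}\in\mathbb{Z}^2$, $|\boldsymbol{v}|=|v_1|+|v_2|$; $\boldsymbol{\delta}_k$ is the $k$-th unit vector. Chain between $\beta_{\boldsymbol{i}},\beta_{\boldsymbol{j}}\in\mathcal{B}_{\ell,\ell+1}$: a sequence $\beta_{\boldsymbol{t}_0},\dots,\beta_{\boldsymbol{t}_r}\in\mathcal{B}_{\ell,\ell+1}$ with $\boldsymbol{t}_0=\boldsymbol{i}$, $\boldsymbol{t}_r=\boldsymbol{j}$, $|\boldsymbol{t}_l-\boldsymbol{t}_{l-1}|=1$; it is a shortest chain if $r=\sum_k|j_k-i_k|$. Minimal $(\ell+1)$-intersection: $\beta_{\boldsymbol{i}},\beta_{\boldsymbol{j}}\in\mathcal{B}_{\ell,\ell+1}$ share one if there exist $k_0\in\{1,2\}$ and knots $\xi_{t_1,\ell+1,1}\in\Xi_{\ell+1,1}$, $\xi_{t_2,\ell+1,2}\in\Xi_{\ell+1,2}$ such that $\overline{\operatorname{supp}}(\beta_{\boldsymbol{i}})\cap\overline{\operatorname{supp}}(\beta_{\boldsymbol{j}})\supseteq I_1\times I_2$, where $I_k=(\xi_{t_k,\ell+1,k},\xi_{t_k+p_{(\ell+1,k)},\ell+1,k})$ for $k\ne k_0$ and $I_{k_0}=\{\xi_{t_{k_0},\ell+1,k_0}\}$. Problematic pair: $\beta_{\boldsymbol{i}},\beta_{\boldsymbol{j}}\in\mathcal{B}_{\ell,\ell+1}$ sharing a minimal $(\ell+1)$-intersection such that no shortest chain between them exists. A B-spline is problematic with another if they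 form a problematic pair. $k$-side configuration: $S_{\boldsymbol{i},k}=\{\beta_{\boldsymbol{t}}\in\mathcal{B}^{\mathbf{0}}_\ell:\boldsymbol{t}-\boldsymbol{i}=\pm\boldsymbol{\delta}_k\}$; $\beta_{\boldsymbol{i}}\in\mathcal{B}_{\ell,\ell+1}$ is resolved in direction $k$ if $S_{\boldsymbol{i},k}\subseteq\mathcal{B}_{\ell,\ell+1}$. *)

theory Defs
  imports "HOL-Analysis.Analysis"
begin

text \<open>Directions are k = 1, 2.
  A knot vector in direction k is given by a function X k :: nat => real
  (X k s is the s-th knot, s = 1, ..., m k) with m k knots.\<close>

definition idx :: "nat \<times> nat \<Rightarrow> nat \<Rightarrow> nat" where
  "idx i k = (if k = 1 then fst i else snd i)"

definition coord :: "real \<times> real \<Rightarrow> nat \<Rightarrow> real" where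
  "coord x k = (if k = 1 then fst x else snd x)"

definition knot_vector :: "(nat \<Rightarrow> nat \<Rightarrow> real) \<Rightarrow> (nat \<Rightarrow> nat) \<Rightarrow> bool" where
  "knot_vector X m = (\<forall>k\<in>{1,2}. \<forall>s t. 1 \<le> s \<longrightarrow> s \<le> t \<longrightarrow> t \<le> m k \<longrightarrow> X k s \<le> X k t)"

text \<open>Indices of the tensor-product B-spline basis: b_{i_k,k} uses the knots
  X k i_k, ..., X k (i_k + p k + 1), which must exist.\<close>
definition basis_idx :: "(nat \<Rightarrow> nat) \<Rightarrow> (nat \<Rightarrow> nat) \<Rightarrow> (nat \<times> nat) set" where
  "basis_idx p m = {i. \<forall>k\<in>{1,2}. 1 \<le> idx i k \<and> idx i k + p k + 1 \<le> m k}"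

definition supp :: "(nat \<Rightarrow> nat \<Rightarrow> real) \<Rightarrow> (nat \<Rightarrow> nat) \<Rightarrow> nat \<times> nat \<Rightarrow> (real \<times> real) set" where
  "supp X p i = {x. \<forall>k\<in>{1,2}. X k (idx i k) < coord x k \<and> coord x k < X k (idx i k + p k + 1)}"

definition Bll :: "(nat \<Rightarrow> nat \<Rightarrow> real) \<Rightarrow> (nat \<Rightarrow> nat) \<Rightarrow> (nat \<Rightarrow> nat) \<Rightarrow> (real \<times> real) set
    \<Rightarrow> (nat \<times> nat) set" where
  "Bll X p m Omega = {i \<in> basis_idx p m. supp X p i \<subseteq> Omega}"

definition dist1 :: "nat \<times> nat \<Rightarrow> nat \<times> nat \<Rightarrow> nat" where
  "dist1 i j = nat (\<bar>int (fst j) - int (fst i)\<bar> + \<bar>int (snd j) - int (snd i)\<bar>)"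

definition is_chain :: "(nat \<Rightarrow> nat \<Rightarrow> real) \<Rightarrow> (nat \<Rightarrow> nat) \<Rightarrow> (nat \<Rightarrow> nat) \<Rightarrow> (real \<times> real) set
    \<Rightarrow> nat \<times> nat \<Rightarrow> nat \<times> nat \<Rightarrow> (nat \<Rightarrow> nat \<times> nat) \<Rightarrow> nat \<Rightarrow> bool" where
  "is_chain X p m Omega i j t r =
     (t 0 = i \<and> t r = j \<and> (\<forall>l\<le>r. t l \<in> Bll X p m Omega)
      \<and> (\<forall>l\<in>{1..r}. dist1 (t (l - 1)) (t l) = 1))"

definition shortest_chain_exists :: "(nat \<Rightarrow> nat \<Rightarrow> real) \<Rightarrow> (nat \<Rightarrow> nat) \<Rightarrow> (nat \<Rightarrow> nat)
    \<Rightarrow> (real \<times> real) set \<Rightarrow> nat \<times> nat \<Rightarrow> nat \<times> nat \<Rightarrow> bool" where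
  "shortest_chain_exists X p m Omega i j = (\<exists>t. is_chain X p m Omega i j t (dist1 i j))"

text \<open>Minimal (l+1)-intersection. X', p', m' describe the level-(l+1) knot vectors.
  The open interval (xi_t, xi_{t+p'}) is required to be nondegenerate.\<close>
definition min_intersection :: "(nat \<Rightarrow> nat \<Rightarrow> real) \<Rightarrow> (nat \<Rightarrow> nat)
    \<Rightarrow> (nat \<Rightarrow> nat \<Rightarrow> real) \<Rightarrow> (nat \<Rightarrow> nat) \<Rightarrow> (nat \<Rightarrow> nat)
    \<Rightarrow> nat \<times> nat \<Rightarrow> nat \<times> nat \<Rightarrow> bool" where
  "min_intersection X p X' p' m' i j =
     (\<exists>k0\<in>{1,2}. \<exists>t. 
        (\<forall>k\<in>{1,2}. 1 \<le> idx t k \<and> idx t k \<le> m' k)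
      \<and> (\<forall>k\<in>{1,2}. k \<noteq> k0 \<longrightarrow> idx t k + p' k \<le> m' k
                              \<and> X' k (idx t k) < X' k (idx t k + p' k))
      \<and> (let I = (\<lambda>k. if k = k0 then {X' k (idx t k)}
                       else {X' k (idx t k) <..< X' k (idx t k + p' k)})
         in I 1 \<times> I 2 \<subseteq> closure (supp X p i) \<inter> closure (supp X p j)))"

definition problematic :: "(nat \<Rightarrow> nat \<Rightarrow> real) \<Rightarrow> (nat \<Rightarrow> nat) \<Rightarrow> (nat \<Rightarrow> nat)
    \<Rightarrow> (nat \<Rightarrow> nat \<Rightarrow> real) \<Rightarrow> (nat \<Rightarrow> nat) \<Rightarrow> (nat \<Rightarrow> nat)
    \<Rightarrow> (real \<times> real) set \<Rightarrow> nat \<times> nat \<Rightarrow> nat \<times> nat \<Rightarrow> bool" where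
  "problematic X p m X' p' m' Omega i j =
     (i \<in> Bll X p m Omega \<and> j \<in> Bll X p m Omega
      \<and> min_intersection X p X' p' m' i j
      \<and> \<not> shortest_chain_exists X p m Omega i j)"

definition side_config :: "(nat \<Rightarrow> nat) \<Rightarrow> (nat \<Rightarrow> nat) \<Rightarrow> nat \<times> nat \<Rightarrow> nat \<Rightarrow> (nat \<times> nat) set" where
  "side_config p m i k = {t \<in> basis_idx p m.
      (\<forall>k'\<in>{1,2}. k' \<noteq> k \<longrightarrow> idx t k' = idx i k')
      \<and> \<bar>int (idx t k) - int (idx i k)\<bar> = 1}"

definition resolved :: "(nat \<Rightarrow> nat \<Rightarrow> real) \<Rightarrow> (nat \<Rightarrow> nat) \<Rightarrow> (nat \<Rightarrow> nat)
    \<Rightarrow> (real \<times> real) set \<Rightarrow> nat \<times> nat \<Rightarrow> nat \<Rightarrow> bool" where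
  "resolved X p m Omega i k = (i \<in> Bll X p m Omega \<and> side_config p m i k \<subseteq> Bll X p m Omega)"

end

theory Submission
  imports Defs
begin

(* Step from i one index towards j in direction k; the result t lies in S_{i,k}, hence in
   B_{l,l+1}, and a shortest chain from t to j would extend to one from i, so t and j are not
   joined by one either. Since t_k lies between i_k and j_k, monotonicity of the knots gives
   that the closed support of t contains the intersection of the closed supports of i and j,
   hence the minimal intersection, unless the support of t is empty. Both that degenerate case
   and the case i_k = j_k are excluded by exhibiting an L-shaped shortest chain: each B-spline
   along it has empty support, or support inside supp(beta_j), or inside the union of the
   closed supports of beta_i and beta_j, which lies in the closed set Omega. The level-(l+1)
   knots enter only through the nonempty box of the minimal intersection, so no property of
   them is needed. *)

lemma directions_cases:
  assumes "{k, k'} = {1, 2::nat}"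
  obtains "k = 1" "k' = 2" | "k = 2" "k' = 1"
  using assms by (metis doubleton_eq_iff)

lemma ball_directions_iff:
  assumes "{k, k'} = {1, 2::nat}"
  shows "(\<forall>kk\<in>{1,2}. P kk) \<longleftrightarrow> P k \<and> P k'"
  using assms by (cases rule: directions_cases) auto

lemma prod_eq_iff_idx:
  assumes "{k, k'} = {1, 2}"
  shows "s = t \<longleftrightarrow> idx s k = idx t k \<and> idx s k' = idx t k'"
  using assms by (cases rule: directions_cases) (auto simp: idx_def prod_eq_iff)

lemma ex_idx_eq:
  assumes "{k, k'} = {1, 2}"
  shows "\<exists>s. idx s k = a \<and> idx s k' = b"
  using assms by (cases rule: directions_cases) (auto simp: idx_def)

lemma dist1_idx:
  assumes "{k, k'} = {1, 2}"
  shows "int (dist1 s t) = \<bar>int (idx t k) - int (idx s k)\<bar> + \<bar>int (idx t k') - int (idx s k')\<bar>"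
  using assms by (cases rule: directions_cases) (auto simp: dist1_def idx_def)

lemma basis_idx_iff:
  assumes "{k, k'} = {1, 2}"
  shows "s \<in> basis_idx p m \<longleftrightarrow>
    (1 \<le> idx s k \<and> idx s k + p k + 1 \<le> m k) \<and> (1 \<le> idx s k' \<and> idx s k' + p k' + 1 \<le> m k')"
  unfolding basis_idx_def ball_directions_iff[OF assms] by simp

lemma ex_step_toward:
  fixes a b :: nat
  assumes "a \<noteq> b"
  obtains c where "\<bar>int c - int a\<bar> = 1" "\<bar>int b - int a\<bar> = \<bar>int b - int c\<bar> + 1"
    "c \<in> {min a b..max a b}"
proof (cases "a < b")
  case True
  then show ?thesis by (intro that[of "a + 1"]) auto
next
  case False
  then show ?thesis using assms by (intro that[of "a - 1"]) auto
qed

lemma mono_on_between: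
  fixes f :: "'a::linorder \<Rightarrow> 'b::linorder"
  assumes "mono_on {a..b} f" "u \<in> {a..b}" "v \<in> {a..b}" "w \<in> {min u v..max u v}"
  shows "f w \<in> {min (f u) (f v)..max (f u) (f v)}"
proof -
  have "w \<in> {a..b}" using assms(2-4) by (cases "u \<le> v") auto
  then show ?thesis
    using assms mono_onD[OF assms(1), of u w] mono_onD[OF assms(1), of w v]
      mono_onD[OF assms(1), of v w] mono_onD[OF assms(1), of w u]
    by (cases "u \<le> v") (auto simp: min_def max_def)
qed

lemma mono_on_span_inter_subset:
  fixes f :: "nat \<Rightarrow> 'b::linorder"
  assumes "mono_on {a..b} f" "u \<in> {a..b}" "u + q + 1 \<in> {a..b}" "v \<in> {a..b}" "v + q + 1 \<in> {a..b}"
    and "w \<in> {min u v..max u v}"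
  shows "{f u..f (u + q + 1)} \<inter> {f v..f (v + q + 1)} \<subseteq> {f w..f (w + q + 1)}"
proof -
  have wq: "w + q + 1 \<in> {min (u + q + 1) (v + q + 1)..max (u + q + 1) (v + q + 1)}"
    using assms(6) by auto
  show ?thesis
    using mono_on_between[OF assms(1,2,4,6)] mono_on_between[OF assms(1,3,5) wq] by auto
qed

lemma mono_on_span_subset_Un:
  fixes f :: "nat \<Rightarrow> 'b::linorder"
  assumes "mono_on {a..b} f" "u \<in> {a..b}" "u + q + 1 \<in> {a..b}" "v \<in> {a..b}" "v + q + 1 \<in> {a..b}"
    and "w \<in> {min u v..max u v}"
    and "{f u..f (u + q + 1)} \<inter> {f v..f (v + q + 1)} \<noteq> {}"
  shows "{f w..f (w + q + 1)} \<subseteq> {f u..f (u + q + 1)} \<union> {f v..f (v + q + 1)}"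
proof -
  have wq: "w + q + 1 \<in> {min (u + q + 1) (v + q + 1)..max (u + q + 1) (v + q + 1)}"
    using assms(6) by auto
  show ?thesis
    using mono_on_between[OF assms(1,2,4,6)] mono_on_between[OF assms(1,3,5) wq] assms(7)
    by (auto simp: min_def max_def split: if_splits)
qed

lemma mono_on_span_le_if_degenerate:
  fixes f :: "nat \<Rightarrow> 'b::linorder"
  assumes "mono_on {a..b} f" "u \<in> {a..b}" "u + q + 1 \<in> {a..b}" "v \<in> {a..b}" "v + q + 1 \<in> {a..b}"
    and "w \<in> {min u v..max u v}"
    and "f (u + q + 1) \<le> f u" "f u \<in> {f v..f (v + q + 1)}"
  shows "f v \<le> f w \<and> f (w + q + 1) \<le> f (v + q + 1)"
proof -
  have wq: "w + q + 1 \<in> {min (u + q + 1) (v + q + 1)..max (u + q + 1) (v + q + 1)}"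
    using assms(6) by auto
  show ?thesis
    using mono_on_between[OF assms(1,2,4,6)] mono_on_between[OF assms(1,3,5) wq] assms(7,8)
    by (auto simp: min_def max_def split: if_splits)
qed

lemma knot_vector_mono_on: "knot_vector X m \<Longrightarrow> k \<in> {1,2} \<Longrightarrow> mono_on {1..m k} (X k)"
  unfolding knot_vector_def by (auto intro: mono_onI)

lemma supp_Times:
  "supp X p s = {X 1 (fst s)<..<X 1 (fst s + p 1 + 1)} \<times> {X 2 (snd s)<..<X 2 (snd s + p 2 + 1)}"
  by (auto simp: supp_def idx_def coord_def)

lemma supp_nonempty_iff:
  "supp X p s \<noteq> {} \<longleftrightarrow> (\<forall>k\<in>{1,2}. X k (idx s k) < X k (idx s k + p k + 1))"
  unfolding supp_Times by (auto simp: idx_def)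

lemma mem_closure_supp_iff:
  "x \<in> closure (supp X p s) \<longleftrightarrow>
     supp X p s \<noteq> {} \<and> (\<forall>k\<in>{1,2}. coord x k \<in> {X k (idx s k)..X k (idx s k + p k + 1)})"
proof (cases "supp X p s = {}")
  case False
  then have "X 1 (fst s) < X 1 (fst s + p 1 + 1)" "X 2 (snd s) < X 2 (snd s + p 2 + 1)"
    unfolding supp_nonempty_iff by (auto simp: idx_def)
  then show ?thesis
    unfolding supp_Times closure_Times
    by (cases x) (auto simp: idx_def coord_def closure_greaterThanLessThan)
qed simp

lemma closure_supp_subset:
  "closed Omega \<Longrightarrow> s \<in> Bll X p m Omega \<Longrightarrow> closure (supp X p s) \<subseteq> Omega"
  by (simp add: Bll_def closure_minimal)

lemma shortest_chain_exists_refl: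
  "j \<in> Bll X p m Omega \<Longrightarrow> shortest_chain_exists X p m Omega j j"
  unfolding shortest_chain_exists_def is_chain_def
  by (rule exI[of _ "\<lambda>_. j"]) (simp add: dist1_def)

lemma shortest_chain_exists_prepend:
  assumes "i \<in> Bll X p m Omega" "shortest_chain_exists X p m Omega t j"
    and "dist1 i t = 1" "dist1 i j = dist1 t j + 1"
  shows "shortest_chain_exists X p m Omega i j"
proof -
  obtain c where c: "is_chain X p m Omega t j c (dist1 t j)"
    using assms(2) unfolding shortest_chain_exists_def by blast
  define c' where "c' l = (if l = 0 then i else c (l - 1))" for l
  have "dist1 (c' (l - 1)) (c' l) = 1" if l: "l \<in> {1..dist1 i j}" for l
  proof (cases "l = 1")
    case True
    then show ?thesis using c assms(3) by (simp add: c'_def is_chain_def)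
  next
    case False
    then have "l - 1 \<in> {1..dist1 t j}" using l assms(4) by auto
    then have "dist1 (c (l - 1 - 1)) (c (l - 1)) = 1" using c unfolding is_chain_def by blast
    then show ?thesis using False l by (simp add: c'_def)
  qed
  then have "is_chain X p m Omega i j c' (dist1 i j)"
    using c assms(1,4) by (auto simp: is_chain_def c'_def)
  then show ?thesis unfolding shortest_chain_exists_def by blast
qed

definition corner_path :: "nat \<Rightarrow> nat \<Rightarrow> nat \<times> nat \<Rightarrow> nat \<times> nat \<Rightarrow> (nat \<times> nat) set" where
  "corner_path k k' s j =
     {u. idx u k = idx s k \<and> idx u k' \<in> {min (idx s k') (idx j k')..max (idx s k') (idx j k')}}
   \<union> {u. idx u k' = idx j k' \<and> idx u k \<in> {min (idx s k) (idx j k)..max (idx s k) (idx j k)}}"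

lemma corner_path_step:
  assumes "{k, k'} = {1, 2}" "s \<noteq> j"
  obtains s1 where "dist1 s s1 = 1" "dist1 s j = dist1 s1 j + 1"
    "corner_path k k' s1 j \<subseteq> corner_path k k' s j"
proof (cases "idx s k' = idx j k'")
  case True
  then have "idx s k \<noteq> idx j k" using assms prod_eq_iff_idx by blast
  then obtain c where c: "\<bar>int c - int (idx s k)\<bar> = 1"
    "\<bar>int (idx j k) - int (idx s k)\<bar> = \<bar>int (idx j k) - int c\<bar> + 1"
    "c \<in> {min (idx s k) (idx j k)..max (idx s k) (idx j k)}"
    by (rule ex_step_toward)
  obtain s1 where s1: "idx s1 k = c" "idx s1 k' = idx s k'"
    using ex_idx_eq[OF assms(1)] by blast
  have "int (dist1 s s1) = 1" "int (dist1 s j) = int (dist1 s1 j) + 1"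
    using c s1 True dist1_idx[OF assms(1)] by simp_all
  moreover have "corner_path k k' s1 j \<subseteq> corner_path k k' s j"
    using c s1 True by (auto simp: corner_path_def)
  ultimately show ?thesis by (intro that) simp_all
next
  case False
  then obtain c where c: "\<bar>int c - int (idx s k')\<bar> = 1"
    "\<bar>int (idx j k') - int (idx s k')\<bar> = \<bar>int (idx j k') - int c\<bar> + 1"
    "c \<in> {min (idx s k') (idx j k')..max (idx s k') (idx j k')}"
    by (rule ex_step_toward)
  obtain s1 where s1: "idx s1 k = idx s k" "idx s1 k' = c"
    using ex_idx_eq[OF assms(1)] by blast
  have "int (dist1 s s1) = 1" "int (dist1 s j) = int (dist1 s1 j) + 1"
    using c s1 dist1_idx[OF assms(1)] by simp_all
  moreover have "corner_path k k' s1 j \<subseteq> corner_path k k' s j"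
    using c s1 by (auto simp: corner_path_def)
  ultimately show ?thesis by (intro that) simp_all
qed

lemma shortest_chain_exists_if_corner_path:
  assumes "{k, k'} = {1, 2}" "corner_path k k' s j \<subseteq> Bll X p m Omega"
  shows "shortest_chain_exists X p m Omega s j"
  using assms(2)
proof (induction "dist1 s j" arbitrary: s)
  case 0
  then have "s = j" using dist1_idx[OF assms(1), of s j] prod_eq_iff_idx[OF assms(1)] by arith
  moreover have "j \<in> corner_path k k' j j" by (simp add: corner_path_def)
  ultimately show ?case using 0 shortest_chain_exists_refl by blast
next
  case (Suc n)
  then have "s \<noteq> j" by (auto simp: dist1_def)
  then obtain s1 where s1: "dist1 s s1 = 1" "dist1 s j = dist1 s1 j + 1"
    "corner_path k k' s1 j \<subseteq> corner_path k k' s j"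
    using corner_path_step[OF assms(1)] by blast
  have "s \<in> corner_path k k' s j" by (simp add: corner_path_def)
  moreover have "shortest_chain_exists X p m Omega s1 j"
    using Suc s1 by (intro Suc.hyps) auto
  ultimately show ?case using Suc.prems s1 shortest_chain_exists_prepend by blast
qed

lemma shortest_chain_exists_if_aligned:
  assumes "knot_vector X m" "closed Omega" "{k, k'} = {1, 2}"
    and i: "i \<in> Bll X p m Omega" and j: "j \<in> Bll X p m Omega"
    and "idx i k = idx j k" "closure (supp X p i) \<inter> closure (supp X p j) \<noteq> {}"
  shows "shortest_chain_exists X p m Omega i j"
proof (rule shortest_chain_exists_if_corner_path[OF assms(3)], rule subsetI)
  note dirs = ball_directions_iff[OF assms(3)]
  have k': "k' \<in> {1,2}" using assms(3) by auto
  obtain x where "x \<in> closure (supp X p i)" "x \<in> closure (supp X p j)" using assms(7) by blast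
  then have ne: "supp X p i \<noteq> {}" "supp X p j \<noteq> {}"
    and x: "coord x k' \<in> {X k' (idx i k')..X k' (idx i k' + p k' + 1)}"
      "coord x k' \<in> {X k' (idx j k')..X k' (idx j k' + p k' + 1)}"
    unfolding mem_closure_supp_iff dirs by auto
  have bi: "1 \<le> idx i k" "idx i k + p k + 1 \<le> m k" "1 \<le> idx i k'" "idx i k' + p k' + 1 \<le> m k'"
    and bj: "1 \<le> idx j k'" "idx j k' + p k' + 1 \<le> m k'"
    using i j by (auto simp: Bll_def basis_idx_iff[OF assms(3)])
  fix s assume "s \<in> corner_path k k' i j"
  then have sk: "idx s k = idx i k"
    and sk': "idx s k' \<in> {min (idx i k') (idx j k')..max (idx i k') (idx j k')}"
    using assms(6) by (auto simp: corner_path_def)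
  have span: "{X k' (idx s k')..X k' (idx s k' + p k' + 1)} \<subseteq>
      {X k' (idx i k')..X k' (idx i k' + p k' + 1)} \<union> {X k' (idx j k')..X k' (idx j k' + p k' + 1)}"
    using x bi bj
    by (intro mono_on_span_subset_Un[OF knot_vector_mono_on[OF assms(1) k'] _ _ _ _ sk']) auto
  have "s \<in> basis_idx p m"
    using sk sk' bi bj by (auto simp: basis_idx_iff[OF assms(3)])
  moreover have "supp X p s \<subseteq> closure (supp X p i) \<union> closure (supp X p j)"
  proof
    fix y assume "y \<in> supp X p s"
    then have yk: "coord y k \<in> {X k (idx i k)..X k (idx i k + p k + 1)}"
      and "coord y k' \<in> {X k' (idx s k')..X k' (idx s k' + p k' + 1)}"
      using sk unfolding supp_def dirs by auto
    then have "coord y k' \<in> {X k' (idx i k')..X k' (idx i k' + p k' + 1)} \<or>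
        coord y k' \<in> {X k' (idx j k')..X k' (idx j k' + p k' + 1)}"
      using span by blast
    then show "y \<in> closure (supp X p i) \<union> closure (supp X p j)"
      unfolding Un_iff mem_closure_supp_iff dirs using yk ne assms(6) by auto
  qed
  then have "supp X p s \<subseteq> Omega"
    using closure_supp_subset[OF assms(2) i] closure_supp_subset[OF assms(2) j] by blast
  ultimately show "s \<in> Bll X p m Omega" by (simp add: Bll_def)
qed

lemma shortest_chain_exists_if_degenerate:
  assumes "knot_vector X m" "{k, k'} = {1, 2}"
    and t: "t \<in> Bll X p m Omega" and j: "j \<in> Bll X p m Omega"
    and deg: "X k (idx t k + p k + 1) \<le> X k (idx t k)"
    and "X k (idx t k) \<in> {X k (idx j k)..X k (idx j k + p k + 1)}"
  shows "shortest_chain_exists X p m Omega t j"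
proof (rule shortest_chain_exists_if_corner_path[OF assms(2)], rule subsetI)
  note dirs = ball_directions_iff[OF assms(2)]
  have k: "k \<in> {1,2}" using assms(2) by auto
  have bt: "1 \<le> idx t k" "idx t k + p k + 1 \<le> m k" "1 \<le> idx t k'" "idx t k' + p k' + 1 \<le> m k'"
    and bj: "1 \<le> idx j k" "idx j k + p k + 1 \<le> m k" "1 \<le> idx j k'" "idx j k' + p k' + 1 \<le> m k'"
    using t j by (auto simp: Bll_def basis_idx_iff[OF assms(2)])
  fix s assume "s \<in> corner_path k k' t j"
  then consider
      "idx s k = idx t k" "idx s k' \<in> {min (idx t k') (idx j k')..max (idx t k') (idx j k')}"
    | "idx s k' = idx j k'" "idx s k \<in> {min (idx t k) (idx j k)..max (idx t k) (idx j k)}"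
    by (auto simp: corner_path_def)
  then show "s \<in> Bll X p m Omega"
  proof cases
    case 1
    then have "s \<in> basis_idx p m" using bt bj by (auto simp: basis_idx_iff[OF assms(2)])
    moreover have "supp X p s = {}" using supp_nonempty_iff k 1(1) deg by (metis not_less)
    ultimately show ?thesis by (simp add: Bll_def)
  next
    case 2
    have "X k (idx j k) \<le> X k (idx s k) \<and> X k (idx s k + p k + 1) \<le> X k (idx j k + p k + 1)"
      using bt bj assms(6) deg
      by (intro mono_on_span_le_if_degenerate[OF knot_vector_mono_on[OF assms(1) k] _ _ _ _ 2(2)]) auto
    then have "supp X p s \<subseteq> supp X p j"
      using 2 unfolding supp_def dirs by fastforce
    moreover have "s \<in> basis_idx p m" using 2 bt bj by (auto simp: basis_idx_iff[OF assms(2)])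
    ultimately show ?thesis using j by (auto simp: Bll_def)
  qed
qed

lemma inter_closure_supp_subset_if_no_shortest_chain:
  assumes "knot_vector X m" "{k, k'} = {1, 2}"
    and i: "i \<in> Bll X p m Omega" and t: "t \<in> Bll X p m Omega" and j: "j \<in> Bll X p m Omega"
    and tk': "idx t k' = idx i k'"
    and tk: "idx t k \<in> {min (idx i k) (idx j k)..max (idx i k) (idx j k)}"
    and "\<not> shortest_chain_exists X p m Omega t j"
  shows "closure (supp X p i) \<inter> closure (supp X p j) \<subseteq> closure (supp X p t)"
proof
  note dirs = ball_directions_iff[OF assms(2)]
  have k: "k \<in> {1,2}" using assms(2) by auto
  fix y assume "y \<in> closure (supp X p i) \<inter> closure (supp X p j)"
  then have ne: "supp X p i \<noteq> {}"
    and yi: "coord y k \<in> {X k (idx i k)..X k (idx i k + p k + 1)}"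
      "coord y k' \<in> {X k' (idx i k')..X k' (idx i k' + p k' + 1)}"
    and yj: "coord y k \<in> {X k (idx j k)..X k (idx j k + p k + 1)}"
    unfolding Int_iff mem_closure_supp_iff dirs by auto
  have yt: "coord y k \<in> {X k (idx t k)..X k (idx t k + p k + 1)}"
    using i t j yi yj
    by (intro set_mp[OF mono_on_span_inter_subset[OF knot_vector_mono_on[OF assms(1) k] _ _ _ _ tk]])
      (auto simp: Bll_def basis_idx_iff[OF assms(2)])
  have "X k (idx t k) < X k (idx t k + p k + 1)"
  proof (rule ccontr)
    assume deg: "\<not> ?thesis"
    then have "X k (idx t k) = coord y k" using yt by auto
    then have "shortest_chain_exists X p m Omega t j"
      using deg yj by (intro shortest_chain_exists_if_degenerate[OF assms(1,2) t j]) auto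
    with assms(8) show False ..
  qed
  moreover have "X k' (idx t k') < X k' (idx t k' + p k' + 1)"
    using ne tk' unfolding supp_nonempty_iff dirs by simp
  ultimately have "supp X p t \<noteq> {}" unfolding supp_nonempty_iff dirs ..
  then show "y \<in> closure (supp X p t)"
    unfolding mem_closure_supp_iff dirs using yt yi(2) tk' by simp
qed

lemma min_intersection_closure_inter_nonempty:
  "min_intersection X p X' p' m' i j \<Longrightarrow> closure (supp X p i) \<inter> closure (supp X p j) \<noteq> {}"
  unfolding min_intersection_def Let_def by (fastforce dest: less_imp_le)

lemma min_intersection_mono:
  "min_intersection X p X' p' m' i j \<Longrightarrow>
   closure (supp X p i) \<inter> closure (supp X p j) \<subseteq> closure (supp X p t) \<Longrightarrow>
   min_intersection X p X' p' m' t j"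
  unfolding min_intersection_def Let_def by blast

lemma ex_side_config_toward:
  assumes "{k, k'} = {1, 2}" "i \<in> basis_idx p m" "j \<in> basis_idx p m" "idx i k \<noteq> idx j k"
  obtains t where "t \<in> side_config p m i k" "idx t k' = idx i k'"
    "idx t k \<in> {min (idx i k) (idx j k)..max (idx i k) (idx j k)}"
    "dist1 i t = 1" "dist1 i j = dist1 t j + 1"
    "\<bar>int (idx t k) - int (idx j k)\<bar> < \<bar>int (idx i k) - int (idx j k)\<bar>"
proof -
  obtain c where c: "\<bar>int c - int (idx i k)\<bar> = 1"
    "\<bar>int (idx j k) - int (idx i k)\<bar> = \<bar>int (idx j k) - int c\<bar> + 1"
    "c \<in> {min (idx i k) (idx j k)..max (idx i k) (idx j k)}"
    using ex_step_toward[OF assms(4)] by blast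
  obtain t where t: "idx t k = c" "idx t k' = idx i k'"
    using ex_idx_eq[OF assms(1)] by blast
  have "t \<in> basis_idx p m"
    using assms(2,3) t c by (auto simp: basis_idx_iff[OF assms(1)])
  moreover have "\<forall>kk\<in>{1,2}. kk \<noteq> k \<longrightarrow> idx t kk = idx i kk"
    using assms(1) t(2) by (cases rule: directions_cases) auto
  ultimately have "t \<in> side_config p m i k" using t c by (simp add: side_config_def)
  moreover have "int (dist1 i t) = 1" "int (dist1 i j) = int (dist1 t j) + 1"
    using t c dist1_idx[OF assms(1)] by simp_all
  ultimately show ?thesis using t c by (intro that) auto
qed

theorem mainTheorem3:
  fixes X X' :: "nat \<Rightarrow> nat \<Rightarrow> real" and p m p' m' :: "nat \<Rightarrow> nat"
    and Omega :: "(real \<times> real) set" and i j :: "nat \<times> nat" and k :: nat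
  assumes "knot_vector X m" and "knot_vector X' m'"
    and "closed Omega"
    and "k \<in> {1,2}"
    and "problematic X p m X' p' m' Omega i j"
    and "resolved X p m Omega i k"
  shows "\<exists>t\<in>side_config p m i k. problematic X p m X' p' m' Omega t j
           \<and> \<bar>int (idx t k) - int (idx j k)\<bar> < \<bar>int (idx i k) - int (idx j k)\<bar>"
proof -
  have dirs: "{k, 3 - k} = {1, 2}" using assms(4) by auto
  have i: "i \<in> Bll X p m Omega" and j: "j \<in> Bll X p m Omega"
    and meet: "min_intersection X p X' p' m' i j"
    and no_chain: "\<not> shortest_chain_exists X p m Omega i j"
    using assms(5) by (auto simp: problematic_def)
  have "idx i k \<noteq> idx j k"
    using shortest_chain_exists_if_aligned[OF assms(1,3) dirs i j]
      min_intersection_closure_inter_nonempty[OF meet] no_chain by blast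
  then obtain t where t: "t \<in> side_config p m i k" "idx t (3 - k) = idx i (3 - k)"
    "idx t k \<in> {min (idx i k) (idx j k)..max (idx i k) (idx j k)}"
    "dist1 i t = 1" "dist1 i j = dist1 t j + 1"
    "\<bar>int (idx t k) - int (idx j k)\<bar> < \<bar>int (idx i k) - int (idx j k)\<bar>"
    using ex_side_config_toward[OF dirs] i j unfolding Bll_def by blast
  have t_Bll: "t \<in> Bll X p m Omega" using assms(6) t(1) by (auto simp: resolved_def)
  have no_chain_t: "\<not> shortest_chain_exists X p m Omega t j"
    using shortest_chain_exists_prepend[OF i _ t(4,5)] no_chain by blast
  have "min_intersection X p X' p' m' t j"
    using inter_closure_supp_subset_if_no_shortest_chain[OF assms(1) dirs i t_Bll j t(2,3) no_chain_t]
    by (rule min_intersection_mono[OF meet])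
  then show ?thesis using t t_Bll j no_chain_t by (auto simp: problematic_def)
qed

end
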